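(* Let $n_b\ge 1$, $d_l\ge 4$, $L\ge 5$, $M\ge 1$ be integers, and let $H$ be a quasi-cyclic SC-LDPC parity-check matrix with parameters $(n_b,d_l,L,M)$ and reuse $T=3$ (as defined in the context). Then, for every choice of the shift values $p_{x,y}$ satisfying the reuse-$3$ condition, the Tanner graph of $H$ contains a cycle of length at most $10$; in particular its girth is at most $10$.
   Context: Quasi-cyclic SC-LDPC matrix: fix integers $n_b\ge1$ (bit nodes per protograph; one check node per protograph), $d_l\ge 2$, $L\ge1$, $M\ge1$. $H$ is a binary block matrix with $L+d_l-1$ block rows (indexed $x=1,\dots,L+d_l-1$) and $n_bL$ block columns (indexed $y=1,\dots,n_bL$), each block of size $M\times M$. For a block column $y$ put $t(y)=\lceil y/n_b\rceil$. Block $(x,y)$ is the all-zero matrix unless $t(y)\le x\le t(y)+d_l-1$, in which case it equals the circulant permutation matrix $I_{(p_{x,y})}$ for a shift value $p_{x,y}\in\{0,\dots,M-1\}$; here $I_{(p)}$ is the $M\times M$ matrix whose row $r$ ($0\le r\le M-1$) has a single $1$, in column $(r+p)\bmod M$, and zeros elsewhere. Reuse-$T$ condition (periodic time-variant construction with period $T$): $p_{x+T,\,y+Tn_b}=p_{x,y}$ whenever both $(x,y)$ and $(x+T,y+Tn_b)$ are nonzero blocks of $H$; otherwise the shift values are arbitrary. The Tanner graph of $H$ is the bipartite graph with one bit node per column and one check node per row of $H$, a bit node and check node being adjacent iff the corresponding entry of $H$ is $1$. The girth is the length of a shortest cycle in the Tanner graph. *)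

theory Defs
  imports Main "HOL-Library.Extended_Nat"
begin

text \<open>Block column y (1-indexed) belongs to protograph time t(y) = ceil(y / nb).\<close>
definition tcol :: "nat \<Rightarrow> nat \<Rightarrow> nat" where
  "tcol nb y = (y + nb - 1) div nb"

definition nonzero_block :: "nat \<Rightarrow> nat \<Rightarrow> nat \<Rightarrow> nat \<Rightarrow> nat \<Rightarrow> bool" where
  "nonzero_block nb dl L x y \<longleftrightarrow>
     1 \<le> x \<and> x \<le> L + dl - 1 \<and> 1 \<le> y \<and> y \<le> nb * L \<and>
     tcol nb y \<le> x \<and> x \<le> tcol nb y + dl - 1"

text \<open>Entry of H at row r (0..M-1) of block row x and column c (0..M-1) of block column y.
  The block is I_(p x y): row r has its single 1 in column (r + p) mod M.\<close>
definition H_entry :: "nat \<Rightarrow> nat \<Rightarrow> nat \<Rightarrow> nat \<Rightarrow> (nat \<Rightarrow> nat \<Rightarrow> nat)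
                       \<Rightarrow> nat \<Rightarrow> nat \<Rightarrow> nat \<Rightarrow> nat \<Rightarrow> bool" where
  "H_entry nb dl L M p x r y c \<longleftrightarrow>
     nonzero_block nb dl L x y \<and> r < M \<and> c < M \<and> c = (r + p x y) mod M"

definition valid_shifts :: "nat \<Rightarrow> nat \<Rightarrow> nat \<Rightarrow> nat \<Rightarrow> (nat \<Rightarrow> nat \<Rightarrow> nat) \<Rightarrow> bool" where
  "valid_shifts nb dl L M p \<longleftrightarrow>
     (\<forall>x y. nonzero_block nb dl L x y \<longrightarrow> p x y < M)"

definition reuse_cond :: "nat \<Rightarrow> nat \<Rightarrow> nat \<Rightarrow> nat \<Rightarrow> (nat \<Rightarrow> nat \<Rightarrow> nat) \<Rightarrow> bool" where
  "reuse_cond nb dl L T p \<longleftrightarrow>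
     (\<forall>x y. nonzero_block nb dl L x y \<and> nonzero_block nb dl L (x + T) (y + T * nb)
            \<longrightarrow> p (x + T) (y + T * nb) = p x y)"

text \<open>Tanner graph nodes: bit node (block column y, offset c), check node (block row x, offset r).\<close>
datatype tnode = Bit nat nat | Chk nat nat

fun tanner_adj :: "nat \<Rightarrow> nat \<Rightarrow> nat \<Rightarrow> nat \<Rightarrow> (nat \<Rightarrow> nat \<Rightarrow> nat) \<Rightarrow> tnode \<Rightarrow> tnode \<Rightarrow> bool" where
  "tanner_adj nb dl L M p (Bit y c) (Chk x r) = H_entry nb dl L M p x r y c"
| "tanner_adj nb dl L M p (Chk x r) (Bit y c) = H_entry nb dl L M p x r y c"
| "tanner_adj nb dl L M p _ _ = False"

definition tanner_cycle :: "nat \<Rightarrow> nat \<Rightarrow> nat \<Rightarrow> nat \<Rightarrow> (nat \<Rightarrow> nat \<Rightarrow> nat) \<Rightarrow> nat \<Rightarrow> bool" where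
  "tanner_cycle nb dl L M p k \<longleftrightarrow>
     (\<exists>vs. length vs = k \<and> 3 \<le> k \<and> distinct vs \<and>
        (\<forall>i<k. tanner_adj nb dl L M p (vs ! i) (vs ! ((i + 1) mod k))))"

text \<open>Girth: length of a shortest cycle (infinity if acyclic).\<close>
definition tanner_girth :: "nat \<Rightarrow> nat \<Rightarrow> nat \<Rightarrow> nat \<Rightarrow> (nat \<Rightarrow> nat \<Rightarrow> nat) \<Rightarrow> enat" where
  "tanner_girth nb dl L M p = (INF k \<in> {k. tanner_cycle nb dl L M p k}. enat k)"

end

theory Submission
  imports Defs
begin

text \<open>
  Under reuse 3 the blocks of block rows 5, 6 and protograph times 4, 5 repeat those of rows
  2, 3 and times 1, 2 (L \<ge> 5 makes time 5 exist). So the base 4-cycle through checks 2, 3 and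
  times 1, 2 and its translate through checks 5, 6 and times 4, 5 have opposite shift sums, and
  they are joined by the edge between check 5 and time 2 (available as d_l \<ge> 4). If the shift sum S of the first
  4-cycle vanishes mod M, that 4-cycle lifts to a 4-cycle of the Tanner graph. Otherwise, going
  around the first 4-cycle, across to check 5, around the translate and back gives a closed walk
  of length 10 with total shift sum 0, which lifts to a closed walk; its two visits of check 5 and
  of time 2 occur at circulant offsets differing by S \<noteq> 0 mod M, so the lift is a 10-cycle.
\<close>

lemma successively_nth:
  assumes "successively P xs" "Suc i < length xs"
  shows "P (xs ! i) (xs ! Suc i)"
  using assms
proof (induction P xs arbitrary: i rule: successively.induct)
  case (3 P x y xs)
  then show ?case by (cases i) auto
qed auto

lemma tanner_cycleI:
  assumes len: "length vs = k" and "distinct vs" "3 \<le> k"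
    and adj: "successively (tanner_adj nb dl L M p) vs"
    and closing: "tanner_adj nb dl L M p (last vs) (hd vs)"
  shows "tanner_cycle nb dl L M p k"
  unfolding tanner_cycle_def
proof (intro exI[of _ vs] conjI allI impI)
  fix i assume i: "i < k"
  show "tanner_adj nb dl L M p (vs ! i) (vs ! ((i + 1) mod k))"
  proof (cases "Suc i < k")
    case True
    then show ?thesis using successively_nth[OF adj] len by simp
  next
    case False
    then have "i = k - 1" using i by simp
    moreover have "vs \<noteq> []" using len \<open>3 \<le> k\<close> by auto
    ultimately have "vs ! i = last vs" "(i + 1) mod k = 0" "vs ! 0 = hd vs"
      using len \<open>3 \<le> k\<close> by (simp_all add: last_conv_nth hd_conv_nth)
    then show ?thesis using closing by simp
  qed
qed (use assms in auto)

lemma tanner_girth_le: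
  assumes "tanner_cycle nb dl L M p k"
  shows "tanner_girth nb dl L M p \<le> enat k"
  unfolding tanner_girth_def using assms by (intro INF_lower) simp

lemma tanner_adj_commute: "tanner_adj nb dl L M p u v = tanner_adj nb dl L M p v u"
  by (cases u; cases v) simp_all

text \<open>Circulant offsets are handled as integers, reduced mod M only when forming a node.\<close>

definition residue :: "nat \<Rightarrow> int \<Rightarrow> nat" where
  "residue M a = nat (a mod int M)"

lemma residue_eq_iff: "M \<ge> 1 \<Longrightarrow> residue M a = residue M b \<longleftrightarrow> a mod int M = b mod int M"
  unfolding residue_def by (simp add: eq_nat_nat_iff)

lemma tanner_adj_Chk_Bit_residue:
  assumes "M \<ge> 1" "nonzero_block nb dl L x y"
    and "(a + int (p x y)) mod int M = b mod int M"
  shows "tanner_adj nb dl L M p (Chk x (residue M a)) (Bit y (residue M b))"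
proof -
  have "int ((nat (a mod int M) + p x y) mod M) = (a + int (p x y)) mod int M"
    using assms(1) by (simp add: zmod_int mod_add_left_eq)
  then have "(residue M a + p x y) mod M = residue M b"
    using assms(3) unfolding residue_def by (metis nat_int)
  then show ?thesis
    using assms(1,2) by (simp add: H_entry_def residue_def nat_less_iff)
qed

lemma tanner_adj_Bit_Chk_residue:
  assumes "M \<ge> 1" "nonzero_block nb dl L x y"
    and "(a + int (p x y)) mod int M = b mod int M"
  shows "tanner_adj nb dl L M p (Bit y (residue M b)) (Chk x (residue M a))"
  using tanner_adj_Chk_Bit_residue[where p = p, OF assms] by (simp add: tanner_adj_commute)

lemma tanner_cycle_4_lift:
  assumes M: "M \<ge> 1" and "x \<noteq> x'" "y \<noteq> y'"
    and "nonzero_block nb dl L x y" "nonzero_block nb dl L x' y"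
    and "nonzero_block nb dl L x' y'" "nonzero_block nb dl L x y'"
    and sum: "(int (p x y) - p x' y + p x' y' - p x y') mod int M = 0"
  shows "tanner_cycle nb dl L M p 4"
proof -
  define s1 where "s1 = int (p x y)"
  define s2 where "s2 = s1 - p x' y"
  define s3 where "s3 = s2 + p x' y'"
  have s3_minus: "s3 - int (p x y') = int (p x y) - p x' y + p x' y' - p x y'"
    unfolding s3_def s2_def s1_def by simp
  have "int M dvd s3 - int (p x y')"
    using sum by (simp only: s3_minus mod_eq_0_iff_dvd)
  then have close: "(0 + int (p x y')) mod int M = s3 mod int M"
    by (simp add: mod_eq_dvd_iff dvd_diff_commute)
  let ?vs = "[Chk x (residue M 0), Bit y (residue M s1), Chk x' (residue M s2), Bit y' (residue M s3)]"
  have "successively (tanner_adj nb dl L M p) ?vs"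
    unfolding successively.simps
    by (intro conjI TrueI tanner_adj_Chk_Bit_residue tanner_adj_Bit_Chk_residue M)
      (simp_all add: assms s1_def s2_def s3_def)
  moreover have "tanner_adj nb dl L M p (last ?vs) (hd ?vs)"
    using M close assms(7) by (simp del: tanner_adj.simps add: tanner_adj_Bit_Chk_residue)
  ultimately show ?thesis
    using assms(2,3) by (intro tanner_cycleI[where vs = ?vs]) simp_all
qed

lemma tanner_cycle_10_lift:
  assumes M: "M \<ge> 1" and "distinct [x, x', x'', x''']" "distinct [y, y', y'', y''']"
    and "nonzero_block nb dl L x y" "nonzero_block nb dl L x' y"
    and "nonzero_block nb dl L x' y'" "nonzero_block nb dl L x y'"
    and "nonzero_block nb dl L x'' y'"
    and "nonzero_block nb dl L x'' y''" "nonzero_block nb dl L x''' y''"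
    and "nonzero_block nb dl L x''' y'''" "nonzero_block nb dl L x'' y'''"
    and S_eq: "S = int (p x y) - p x' y + p x' y' - p x y'"
    and opposite: "int (p x'' y'') - p x''' y'' + p x''' y''' - p x'' y''' = - S"
    and S_nonzero: "S mod int M \<noteq> 0"
  shows "tanner_cycle nb dl L M p 10"
proof -
  define s1 where "s1 = int (p x y)"
  define s2 where "s2 = s1 - p x' y"
  define s3 where "s3 = s2 + p x' y'"
  define s4 where "s4 = s3 - p x'' y'"
  define s5 where "s5 = s4 + p x'' y''"
  define s6 where "s6 = s5 - p x''' y''"
  define s7 where "s7 = s6 + p x''' y'''"
  define s8 where "s8 = s7 - p x'' y'''"
  define s9 where "s9 = s8 + p x'' y'"
  have s8: "s8 = s4 - S" and s9: "s9 = s3 - S"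
    using opposite unfolding s9_def s8_def s7_def s6_def s5_def s4_def by simp_all
  have close: "(0 + int (p x y')) mod int M = s9 mod int M"
    unfolding s9 s3_def s2_def s1_def S_eq by simp
  have "s4 mod int M \<noteq> s8 mod int M" "s3 mod int M \<noteq> s9 mod int M"
    using S_nonzero unfolding s8 s9 by (simp_all add: mod_eq_dvd_iff dvd_eq_mod_eq_0)
  then have distinct_offsets: "residue M s4 \<noteq> residue M s8" "residue M s3 \<noteq> residue M s9"
    using residue_eq_iff[OF M] by blast+
  let ?vs = "[Chk x (residue M 0), Bit y (residue M s1), Chk x' (residue M s2),
    Bit y' (residue M s3), Chk x'' (residue M s4), Bit y'' (residue M s5),
    Chk x''' (residue M s6), Bit y''' (residue M s7), Chk x'' (residue M s8),
    Bit y' (residue M s9)]"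
  have "distinct ?vs"
    using assms(2,3) distinct_offsets by auto
  moreover have "successively (tanner_adj nb dl L M p) ?vs"
    unfolding successively.simps
    by (intro conjI TrueI tanner_adj_Chk_Bit_residue tanner_adj_Bit_Chk_residue M)
      (simp_all add: assms s1_def s2_def s3_def s4_def s5_def s6_def s7_def s8_def s9_def)
  moreover have "tanner_adj nb dl L M p (last ?vs) (hd ?vs)"
    using M close assms(7) by (simp del: tanner_adj.simps add: tanner_adj_Bit_Chk_residue)
  ultimately show ?thesis
    by (intro tanner_cycleI[where vs = ?vs]) simp_all
qed

lemma tcol_first_column: "nb \<ge> 1 \<Longrightarrow> tcol nb (k * nb + 1) = Suc k"
  unfolding tcol_def by simp

lemma nonzero_block_first_column:
  assumes "nb \<ge> 1" "k < L" "k < x" "x \<le> k + dl" "x \<le> L + dl - 1"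
  shows "nonzero_block nb dl L x (k * nb + 1)"
proof -
  have "k * nb + 1 \<le> Suc k * nb" using assms(1) by simp
  also have "\<dots> \<le> L * nb" using assms(2) by (intro mult_le_mono1) simp
  finally show ?thesis
    using assms tcol_first_column[OF assms(1), of k] by (simp add: nonzero_block_def mult.commute)
qed

theorem lemma3:
  fixes nb dl L M :: nat and p :: "nat \<Rightarrow> nat \<Rightarrow> nat"
  assumes "nb \<ge> 1" and "dl \<ge> 4" and "L \<ge> 5" and "M \<ge> 1"
    and "valid_shifts nb dl L M p"
    and "reuse_cond nb dl L 3 p"
  shows "(\<exists>k \<le> 10. tanner_cycle nb dl L M p k) \<and> tanner_girth nb dl L M p \<le> 10"
proof -
  \<comment> \<open>H reduces shifts mod M itself.\<close>
  define col where "col k = k * nb + 1" for k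
  have nz: "nonzero_block nb dl L x (col k)" if "k < x" "x \<le> k + 4" "x \<le> 6" "k \<le> 4" for x k
    using nonzero_block_first_column[OF assms(1)] that assms(2,3) unfolding col_def by simp
  have reuse: "p (x + 3) (col (k + 3)) = p x (col k)" if "k < x" "x \<le> k + 4" "x \<le> 3" "k \<le> 1" for x k
  proof -
    have "col (k + 3) = col k + 3 * nb" unfolding col_def by (simp add: algebra_simps)
    moreover have "nonzero_block nb dl L x (col k)" "nonzero_block nb dl L (x + 3) (col (k + 3))"
      using that by (simp_all add: nz)
    ultimately show ?thesis using assms(6) unfolding reuse_cond_def by metis
  qed
  define S where "S = int (p 2 (col 0)) - p 3 (col 0) + p 3 (col 1) - p 2 (col 1)"
  have opposite: "int (p 5 (col 4)) - p 6 (col 4) + p 6 (col 3) - p 5 (col 3) = - S"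
    using reuse[of 0 2] reuse[of 0 3] reuse[of 1 2] reuse[of 1 3] unfolding S_def by simp
  have "distinct [col 0, col 1, col 4, col 3]"
    using assms(1) unfolding col_def by simp
  then obtain k where k: "k \<le> 10" "tanner_cycle nb dl L M p k"
  proof (cases "S mod int M = 0")
    case True
    then have "tanner_cycle nb dl L M p 4"
      using assms(4) \<open>distinct _\<close> unfolding S_def
      by (intro tanner_cycle_4_lift[where x = 2 and x' = 3 and y = "col 0" and y' = "col 1"])
        (simp_all add: nz)
    then show ?thesis using that[of 4] by simp
  next
    case False
    then have "tanner_cycle nb dl L M p 10"
      using assms(4) \<open>distinct _\<close> opposite
      by (intro tanner_cycle_10_lift[where x = 2 and x' = 3 and x'' = 5 and x''' = 6
            and y = "col 0" and y' = "col 1" and y'' = "col 4" and y''' = "col 3" and S = S])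
        (simp_all add: nz S_def)
    then show ?thesis using that[of 10] by simp
  qed
  have "tanner_girth nb dl L M p \<le> enat k" using k(2) by (rule tanner_girth_le)
  also have "\<dots> \<le> 10" using k(1) by (simp add: numeral_eq_enat)
  finally show ?thesis using k by blast
qed

end
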